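(* Let a regular network on $n$ cells with adjacency matrix $A$ be given. There exists a 2-dimensional synchrony subspace if and only if $A$ has an eigenvector $w\in\mathbb{C}^n$ whose coordinates take exactly two distinct values.
   Context: A regular network is a finite directed graph on cells $1,\dots,n$ (loops and multiple arrows allowed) in which every cell receives the same number $v$ of arrows (the valency). Its adjacency matrix $A=[a_{ij}]$ has $a_{ij}$ equal to the number of arrows cell $i$ receives from cell $j$; every row sum is $v$. $A$ acts on $\mathbb{C}^n$. A polydiagonal is a subspace of $\mathbb{C}^n$ of the form $\{x : x_i=x_j \text{ for all } (i,j)\in R\}$ for some (possibly empty) set $R$ of index pairs. A synchrony subspace is a polydiagonal that is invariant under $A$. *)

theory Defs
  imports "HOL-Analysis.Analysis"
begin

text \<open>Cells are the elements of a finite type 'n (so n = CARD('n)).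
  A network is given by its adjacency matrix A with natural-number entries:
  A $ i $ j = number of arrows cell i receives from cell j.\<close>

definition regular_network :: "nat ^ 'n ^ 'n \<Rightarrow> bool" where
  "regular_network A \<longleftrightarrow> (\<exists>v. \<forall>i. (\<Sum>j\<in>UNIV. A $ i $ j) = v)"

definition cmat :: "nat ^ 'n ^ 'n \<Rightarrow> complex ^ 'n ^ 'n" where
  "cmat A = (\<chi> i j. of_nat (A $ i $ j))"

definition polydiagonal :: "('n \<times> 'n) set \<Rightarrow> (complex ^ 'n) set" where
  "polydiagonal R = {x. \<forall>(i, j)\<in>R. x $ i = x $ j}"

definition synchrony_subspace :: "nat ^ 'n ^ 'n \<Rightarrow> (complex ^ 'n) set \<Rightarrow> bool" where
  "synchrony_subspace A S \<longleftrightarrow>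
     (\<exists>R. S = polydiagonal R) \<and> (\<forall>x\<in>S. cmat A *v x \<in> S)"

end

theory Submission
  imports Defs
begin

text \<open>
  The all-ones vector \<open>\<one>\<close> lies in every polydiagonal and is an eigenvector of \<open>A\<close> for the
  valency \<open>v\<close>. A two-dimensional polydiagonal is therefore spanned by \<open>\<one>\<close> and the indicator
  vector \<open>e\<close> of a proper nonempty set of cells, and its invariance means \<open>A e = b e + a \<one>\<close>.
  If \<open>b \<noteq> v\<close>, the shift \<open>e + a/(b - v) \<one>\<close> is a two-valued eigenvector; if \<open>b = v\<close>, counting
  arrows forces \<open>a = 0\<close>, so \<open>e\<close> itself is one. Conversely, the level sets of a two-valued
  eigenvector \<open>w\<close> define the polydiagonal spanned by \<open>w\<close> and \<open>\<one>\<close>, which is invariant.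
\<close>

definition indicator_vec :: "'n set \<Rightarrow> complex ^ 'n" where
  "indicator_vec P = (\<chi> k. if k \<in> P then 1 else 0)"

lemma indicator_vec_nth: "indicator_vec P $ k = (if k \<in> P then 1 else 0)"
  by (simp add: indicator_vec_def)

lemma cmat_mult_vec_nth: "(cmat A *v x) $ i = (\<Sum>j\<in>UNIV. of_nat (A $ i $ j) * x $ j)"
  by (simp add: cmat_def matrix_vector_mult_def)

lemma cmat_mult_indicator_vec: "(cmat A *v indicator_vec P) $ i = of_nat (\<Sum>j\<in>P. A $ i $ j)"
proof -
  have "(cmat A *v indicator_vec P) $ i = (\<Sum>j\<in>UNIV. if j \<in> P then of_nat (A $ i $ j) else 0)"
    by (simp add: cmat_mult_vec_nth indicator_vec_nth if_distrib cong: if_cong)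
  also have "\<dots> = (\<Sum>j\<in>P. of_nat (A $ i $ j))"
    by (simp add: sum.If_cases)
  finally show ?thesis by simp
qed

lemma cmat_mult_one:
  assumes "\<And>i. (\<Sum>j\<in>UNIV. A $ i $ j) = v"
  shows "cmat A *v 1 = of_nat v *s 1"
proof -
  have "(\<Sum>j\<in>UNIV. of_nat (A $ i $ j) :: complex) = of_nat v" for i
    using assms[of i] by (metis of_nat_sum)
  then show ?thesis by (simp add: vec_eq_iff cmat_mult_vec_nth)
qed

lemma subspace_polydiagonal: "vec.subspace (polydiagonal R)"
  unfolding vec.subspace_def polydiagonal_def by (auto simp: case_prod_beta)

lemma one_in_polydiagonal: "1 \<in> polydiagonal R"
  unfolding polydiagonal_def by auto

lemma independent_nonconstant_one:
  fixes e :: "complex ^ 'n"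
  assumes "e $ i \<noteq> e $ j"
  shows "vec.independent {e, 1}" and "card {e, 1} = 2"
proof -
  have "e \<notin> vec.span {1}"
  proof
    assume "e \<in> vec.span {1}"
    then obtain k where "e = k *s 1" by (auto simp: vec.span_singleton)
    then show False using assms by auto
  qed
  moreover have "1 \<noteq> (0 :: complex ^ 'n)" by (simp add: vec_eq_iff)
  moreover have "e \<noteq> 1" using assms by auto
  ultimately show "vec.independent {e, 1}" "card {e, 1} = 2"
    by (auto simp: vec.independent_insert)
qed

lemma card_range_eq_two_iff:
  "card (range (\<lambda>k. x $ k)) = 2 \<longleftrightarrow> (\<exists>i j. x $ i \<noteq> x $ j \<and> (\<forall>k. x $ k = x $ i \<or> x $ k = x $ j))"
proof
  assume "card (range (\<lambda>k. x $ k)) = 2"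
  then obtain a b where ab: "range (\<lambda>k. x $ k) = {a, b}" "a \<noteq> b"
    by (auto simp: card_2_iff)
  then obtain i j where "x $ i = a" "x $ j = b" by (metis insertI1 insert_commute rangeE)
  then show "\<exists>i j. x $ i \<noteq> x $ j \<and> (\<forall>k. x $ k = x $ i \<or> x $ k = x $ j)"
    using ab by blast
next
  assume "\<exists>i j. x $ i \<noteq> x $ j \<and> (\<forall>k. x $ k = x $ i \<or> x $ k = x $ j)"
  then obtain i j where "x $ i \<noteq> x $ j" "range (\<lambda>k. x $ k) = {x $ i, x $ j}" by blast
  then show "card (range (\<lambda>k. x $ k)) = 2" by simp
qed

lemma mult_vec_in_span_pair:
  fixes M :: "complex ^ 'n ^ 'n"
  assumes "M *v u \<in> vec.span {u, z}" "M *v z \<in> vec.span {u, z}" "x \<in> vec.span {u, z}"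
  shows "M *v x \<in> vec.span {u, z}"
proof -
  have "vec.subspace {x. M *v x \<in> vec.span {u, z}}"
    by (auto simp: vec.subspace_def matrix_vector_right_distrib vec.span_add vec.span_scale
        vec.scale vec.span_zero)
  then show ?thesis using vec.span_induct[OF assms(3)] assms(1,2) by blast
qed

lemma polydiagonal_dim_two_obtain_indicator_basis:
  assumes "vec.dim (polydiagonal R) = 2"
  obtains P i j where "i \<in> P" "j \<notin> P"
    "polydiagonal R = vec.span {indicator_vec P, 1}"
proof -
  let ?S = "polydiagonal R"
  have "\<exists>x\<in>?S. \<exists>i j. x $ i \<noteq> x $ j"
  proof (rule ccontr)
    assume "\<not> ?thesis"
    then have "x = (x $ undefined) *s 1" if "x \<in> ?S" for x
      using that by (auto simp: vec_eq_iff)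
    then have "?S \<subseteq> vec.span {1}"
      by (metis subsetI vec.span_base vec.span_scale singletonI)
    then have "vec.dim ?S \<le> card {1 :: complex ^ 'n}"
      using vec.dim_le_card[of ?S "{1}"] by simp
    then show False using assms by simp
  qed
  then obtain x i j where x: "x \<in> ?S" "x $ i \<noteq> x $ j" by blast
  define P where "P = {k. x $ k = x $ i}"
  have ij: "i \<in> P" "j \<notin> P" using x(2) by (auto simp: P_def)
  have "indicator_vec P \<in> ?S"
    using x(1) by (auto simp: polydiagonal_def indicator_vec_nth P_def)
  have basis_in_S: "{indicator_vec P, 1} \<subseteq> ?S"
    using \<open>indicator_vec P \<in> ?S\<close> by (blast intro: one_in_polydiagonal)
  have ind: "vec.independent {indicator_vec P, 1}" "card {indicator_vec P, 1} = 2"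
    using independent_nonconstant_one[of "indicator_vec P" i j] ij
    by (auto simp: indicator_vec_nth)
  have "vec.dim ?S \<le> card {indicator_vec P, 1}" using assms ind(2) by simp
  then have "?S \<subseteq> vec.span {indicator_vec P, 1}"
    by (rule vec.card_ge_dim_independent[OF basis_in_S ind(1)])
  moreover have "vec.span {indicator_vec P, 1} \<subseteq> ?S"
    using basis_in_S subspace_polydiagonal by (intro vec.span_minimal) auto
  ultimately have "?S = vec.span {indicator_vec P, 1}" by (rule subset_antisym)
  with ij that show ?thesis by blast
qed

lemma polydiagonal_level_sets_eq_span:
  fixes w :: "complex ^ 'n"
  assumes ij: "w $ i \<noteq> w $ j" and two_valued: "\<And>k. w $ k = w $ i \<or> w $ k = w $ j"
  shows "polydiagonal {(k, l). w $ k = w $ l} = vec.span {w, 1}"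
proof (rule subset_antisym)
  show "polydiagonal {(k, l). w $ k = w $ l} \<subseteq> vec.span {w, 1}"
  proof
    fix x assume "x \<in> polydiagonal {(k, l). w $ k = w $ l}"
    then have level: "x $ k = x $ l" if "w $ k = w $ l" for k l
      using that unfolding polydiagonal_def by blast
    define q where "q = (x $ i - x $ j) / (w $ i - w $ j)"
    have q: "q * (w $ i - w $ j) = x $ i - x $ j" using ij by (simp add: q_def)
    have "x $ k = (q *s w + (x $ i - q * w $ i) *s 1) $ k" for k
    proof (cases "w $ k = w $ i")
      case True
      then show ?thesis using level[of k i] by simp
    next
      case False
      then have "w $ k = w $ j" using two_valued[of k] by blast
      moreover have "x $ j = x $ i - q * (w $ i - w $ j)" using q by simp
      ultimately show ?thesis using level[of k j] by (simp add: algebra_simps)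
    qed
    then have "x = q *s w + (x $ i - q * w $ i) *s 1" by (subst vec_eq_iff) blast
    also have "\<dots> \<in> vec.span {w, 1}"
      by (intro vec.span_add vec.span_scale vec.span_base) auto
    finally show "x \<in> vec.span {w, 1}" .
  qed
  show "vec.span {w, 1} \<subseteq> polydiagonal {(k, l). w $ k = w $ l}"
    by (intro vec.span_minimal subspace_polydiagonal) (auto simp: polydiagonal_def)
qed

lemma shifted_eigenvector:
  fixes M :: "complex ^ 'n ^ 'n"
  assumes "M *v 1 = l *s 1" "M *v e = b *s e + a *s 1" "b \<noteq> l"
  shows "M *v (e + (a / (b - l)) *s 1) = b *s (e + (a / (b - l)) *s 1)"
proof -
  define c where "c = a / (b - l)"
  have c: "a + c * l = b * c" using assms(3) by (simp add: c_def field_simps)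
  have "M *v (e + c *s 1) = M *v e + c *s (M *v 1)"
    by (simp add: matrix_vector_right_distrib vec.scale)
  also have "\<dots> = b *s e + (a + c * l) *s 1"
    using assms(1,2) by (simp add: vec_eq_iff algebra_simps)
  also have "\<dots> = b *s (e + c *s 1)"
    using c by (simp add: vec_eq_iff algebra_simps)
  finally show ?thesis unfolding c_def .
qed

text \<open>The nonnegativity of the adjacency matrix enters only here: the cells of \<open>P\<close> receive at
  most \<open>v\<close> arrows from \<open>P\<close>.\<close>

lemma indicator_image_offset_eq_zero:
  assumes rows: "\<And>i. (\<Sum>j\<in>UNIV. A $ i $ j) = v"
    and ij: "i \<in> P" "j \<notin> P"
    and image: "cmat A *v indicator_vec P = of_nat v *s indicator_vec P + a *s 1"
  shows "a = 0"
proof -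
  have "of_nat (\<Sum>l\<in>P. A $ j $ l) = a"
    using arg_cong[OF image, of "\<lambda>y. y $ j"] ij by (simp add: cmat_mult_indicator_vec indicator_vec_nth)
  moreover have "of_nat (\<Sum>l\<in>P. A $ i $ l) = of_nat v + a"
    using arg_cong[OF image, of "\<lambda>y. y $ i"] ij by (simp add: cmat_mult_indicator_vec indicator_vec_nth)
  ultimately have "(\<Sum>l\<in>P. A $ i $ l) = v + (\<Sum>l\<in>P. A $ j $ l)"
    by (metis of_nat_add of_nat_eq_iff)
  moreover have "(\<Sum>l\<in>P. A $ i $ l) \<le> v"
    unfolding rows[of i, symmetric] by (rule sum_mono2) auto
  ultimately have "(\<Sum>l\<in>P. A $ j $ l) = 0" by simp
  with \<open>of_nat (\<Sum>l\<in>P. A $ j $ l) = a\<close> show ?thesis by simp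
qed

lemma two_valued_eigenvector_of_invariant_indicator:
  assumes rows: "\<And>i. (\<Sum>j\<in>UNIV. A $ i $ j) = v"
    and ij: "i \<in> P" "j \<notin> P"
    and invariant: "cmat A *v indicator_vec P \<in> vec.span {indicator_vec P, 1}"
  shows "\<exists>w \<mu>. w \<noteq> 0 \<and> cmat A *v w = \<mu> *s w \<and> card (range (\<lambda>k. w $ k)) = 2"
proof -
  let ?e = "indicator_vec P"
  obtain b a where "cmat A *v ?e - b *s ?e = a *s 1"
    using invariant by (auto simp: vec.span_insert vec.span_singleton)
  then have image: "cmat A *v ?e = b *s ?e + a *s 1" by (simp add: algebra_simps)
  define c where "c = (if b = of_nat v then 0 else a / (b - of_nat v))"
  define w where "w = ?e + c *s 1"
  have "cmat A *v w = b *s w"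
  proof (cases "b = of_nat v")
    case True
    then have "a = 0" using indicator_image_offset_eq_zero[OF rows ij] image by simp
    then show ?thesis using True image by (simp add: w_def c_def)
  next
    case False
    then show ?thesis
      using shifted_eigenvector[OF cmat_mult_one[OF rows] image] by (simp add: w_def c_def)
  qed
  moreover have "w $ i \<noteq> w $ j" "\<And>k. w $ k = w $ i \<or> w $ k = w $ j"
    using ij by (auto simp: w_def indicator_vec_nth)
  moreover from this have "w \<noteq> 0" by auto
  ultimately show ?thesis
    unfolding card_range_eq_two_iff by blast
qed

lemma synchrony_dim_two_imp_two_valued_eigenvector:
  assumes rows: "\<And>i. (\<Sum>j\<in>UNIV. A $ i $ j) = v"
    and "synchrony_subspace A S" "vec.dim S = 2"
  shows "\<exists>w \<mu>. w \<noteq> 0 \<and> cmat A *v w = \<mu> *s w \<and> card (range (\<lambda>k. w $ k)) = 2"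
proof -
  obtain R where invariant: "\<And>x. x \<in> polydiagonal R \<Longrightarrow> cmat A *v x \<in> polydiagonal R"
    and dim: "vec.dim (polydiagonal R) = 2"
    using assms(2,3) unfolding synchrony_subspace_def by blast
  from dim obtain P i j where "i \<in> P" "j \<notin> P" and S: "polydiagonal R = vec.span {indicator_vec P, 1}"
    by (rule polydiagonal_dim_two_obtain_indicator_basis)
  have "indicator_vec P \<in> polydiagonal R" unfolding S by (rule vec.span_base) simp
  then have "cmat A *v indicator_vec P \<in> vec.span {indicator_vec P, 1}"
    using invariant unfolding S by blast
  then show ?thesis
    by (rule two_valued_eigenvector_of_invariant_indicator[OF rows \<open>i \<in> P\<close> \<open>j \<notin> P\<close>])
qed

lemma synchrony_subspace_level_sets_of_eigenvector:
  assumes rows: "\<And>i. (\<Sum>j\<in>UNIV. A $ i $ j) = v"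
    and eigen: "cmat A *v w = \<mu> *s w"
    and ij: "w $ i \<noteq> w $ j" and two_valued: "\<And>k. w $ k = w $ i \<or> w $ k = w $ j"
  shows "synchrony_subspace A (polydiagonal {(k, l). w $ k = w $ l})"
    and "vec.dim (polydiagonal {(k, l). w $ k = w $ l}) = 2"
proof -
  let ?S = "polydiagonal {(k, l). w $ k = w $ l}"
  have S: "?S = vec.span {w, 1}" by (rule polydiagonal_level_sets_eq_span[OF ij two_valued])
  have "cmat A *v w \<in> vec.span {w, 1}"
    unfolding eigen by (intro vec.span_scale vec.span_base) simp
  moreover have "cmat A *v 1 \<in> vec.span {w, 1}"
    unfolding cmat_mult_one[OF rows] by (intro vec.span_scale vec.span_base) simp
  ultimately have "\<forall>x\<in>?S. cmat A *v x \<in> ?S"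
    unfolding S using mult_vec_in_span_pair[of "cmat A" w 1] by blast
  then show "synchrony_subspace A ?S" unfolding synchrony_subspace_def by blast
  show "vec.dim ?S = 2"
    unfolding S vec.dim_span_eq_card_independent[OF independent_nonconstant_one(1)[OF ij]]
    by (rule independent_nonconstant_one(2)[OF ij])
qed

theorem mainTheorem8:
  fixes A :: "nat ^ 'n ^ 'n"
  assumes "regular_network A"
  shows "(\<exists>S. synchrony_subspace A S \<and> vec.dim S = 2) \<longleftrightarrow>
         (\<exists>w :: complex ^ 'n. \<exists>\<mu> :: complex. w \<noteq> 0 \<and> cmat A *v w = \<mu> *s w
              \<and> card (range (\<lambda>i. w $ i)) = 2)"
proof -
  obtain v where rows: "\<And>i. (\<Sum>j\<in>UNIV. A $ i $ j) = v"
    using assms unfolding regular_network_def by blast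
  show ?thesis
  proof
    assume "\<exists>S. synchrony_subspace A S \<and> vec.dim S = 2"
    then show "\<exists>w \<mu>. w \<noteq> 0 \<and> cmat A *v w = \<mu> *s w \<and> card (range (\<lambda>i. w $ i)) = 2"
      using synchrony_dim_two_imp_two_valued_eigenvector[OF rows] by blast
  next
    assume "\<exists>w \<mu>. w \<noteq> 0 \<and> cmat A *v w = \<mu> *s w \<and> card (range (\<lambda>i. w $ i)) = 2"
    then obtain w \<mu> where eigen: "cmat A *v w = \<mu> *s w" and two: "card (range (\<lambda>i. w $ i)) = 2"
      by blast
    obtain i j where "w $ i \<noteq> w $ j" "\<And>k. w $ k = w $ i \<or> w $ k = w $ j"
      using card_range_eq_two_iff[THEN iffD1, OF two] by blast
    from synchrony_subspace_level_sets_of_eigenvector[OF rows eigen this]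
    show "\<exists>S. synchrony_subspace A S \<and> vec.dim S = 2" by blast
  qed
qed

end
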